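(* Let $L_{\max}\ge 2$ be an integer and let $\mu_1,\dots,\mu_{L_{\max}}$ be real constants satisfying $\mu_t\ge \mu_{\min}$ for all $t\in\{1,\dots,L_{\max}\}$, for some $\mu_{\min}>0$. For $\theta\in\mathbb{R}$ let $p=\sigma(\theta)$, where $\sigma(x)=1/(1+e^{-x})$, and define $$J(\theta)=\sum_{t=1}^{L_{\max}}\mu_t\,(1-\sigma(\theta))^{t-1}.$$ Let $\theta(s)$, $s\ge 0$, be the solution of the gradient-flow ODE $\frac{d\theta(s)}{ds}=J'(\theta(s))$, $\theta(0)=\theta_0\in\mathbb{R}$, and set $p(s)=\sigma(\theta(s))$. Then: (1) $p(s)$ is strictly decreasing in $s$ and $p(s)\to 0$ as $s\to\infty$; (2) there exist constants $S,K>0$ such that $p(s)\le K/s$ for all $s\ge S$. Consequently, the expected path length $\mathbb{E}[\tau]=\sum_{t=1}^{L_{\max}}(1-p(s))^{t-1}$ converges to $L_{\max}$ as $s\to\infty$.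
   Context: Stylized model of a path-generating policy that only makes continue/stop decisions: at each step $t\in\{1,\dots,L_{\max}\}$ the policy stops with the position-independent probability $p=\sigma(\theta)$, and $\tau\le L_{\max}$ denotes the stopping time (path length), so $\mathbb{P}(\tau\ge t)=(1-p)^{t-1}$. The total return is $G=\sum_{t=1}^{\tau}r_t$ with step rewards $r_t$, and $\mu_t:=\mathbb{E}[r_t\mid \tau\ge t]$ is assumed not to depend on $\theta$; then $J(\theta)=\mathbb{E}[G]=\sum_{t=1}^{L_{\max}}\mu_t(1-p)^{t-1}$, which is the function defined in the claim. The hypothesis $\mu_t\ge\mu_{\min}>0$ expresses that the expected step-level reward is positive at every step. *)

theory Defs
  imports "HOL-Analysis.Analysis"
begin

definition sigmoid :: "real \<Rightarrow> real" where
  "sigmoid x = 1 / (1 + exp (- x))"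

definition Jret :: "nat \<Rightarrow> (nat \<Rightarrow> real) \<Rightarrow> real \<Rightarrow> real" where
  "Jret Lmax \<mu> \<theta> = (\<Sum>t = 1..Lmax. \<mu> t * (1 - sigmoid \<theta>) ^ (t - 1))"

definition exp_len :: "nat \<Rightarrow> real \<Rightarrow> real" where
  "exp_len Lmax p = (\<Sum>t = 1..Lmax. (1 - p) ^ (t - 1))"

end

theory Submission
  imports Defs
begin

text \<open>
  Along the flow, \<open>-J'(\<theta>) = \<sigma>(\<theta>)(1 - \<sigma>(\<theta>)) \<Sum>\<^sub>t \<mu>\<^sub>t (t - 1) (1 - \<sigma>(\<theta>))^(t - 2)\<close>
  is at least \<open>\<mu>\<^sub>2 \<sigma>(\<theta>)(1 - \<sigma>(\<theta>)) > 0\<close>, so \<open>\<theta>\<close> strictly decreases.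
  Since \<open>exp(-\<theta>) \<sigma>(\<theta>) = 1 - \<sigma>(\<theta>)\<close>, the function \<open>exp(-\<theta>)\<close> grows at rate
  \<open>-J'(\<theta>) exp(-\<theta>) \<ge> \<mu>\<^sub>2 (1 - \<sigma>(\<theta>))\<^sup>2 \<ge> \<mu>\<^sub>2 (1 - \<sigma>(\<theta>\<^sub>0))\<^sup>2\<close>, hence at least
  linearly in \<open>s\<close>, and \<open>\<sigma>(\<theta>) \<le> 1 / exp(-\<theta>)\<close> decays like \<open>1 / s\<close>.
\<close>

lemma one_plus_exp_pos: "0 < 1 + exp (x :: real)"
  by (simp add: add_pos_pos)

lemma sigmoid_pos: "0 < sigmoid x"
  unfolding sigmoid_def using one_plus_exp_pos by simp

lemma sigmoid_less_1: "sigmoid x < 1"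
  unfolding sigmoid_def using one_plus_exp_pos by simp

lemma strict_mono_sigmoid: "strict_mono sigmoid"
  unfolding strict_mono_def sigmoid_def using one_plus_exp_pos by (simp add: divide_simps)

lemma strict_antimono_on_sigmoid_comp:
  assumes "strict_antimono_on A f"
  shows "strict_antimono_on A (\<lambda>s. sigmoid (f s))"
proof (rule monotone_onI)
  fix u v assume "u \<in> A" "v \<in> A" "u < v"
  then have "f v < f u"
    using monotone_onD [OF assms] by blast
  then show "sigmoid (f v) < sigmoid (f u)"
    by (rule strict_monoD [OF strict_mono_sigmoid])
qed

lemma exp_minus_mult_sigmoid: "exp (- x) * sigmoid x = 1 - sigmoid x"
  unfolding sigmoid_def using one_plus_exp_pos [of "- x"] by (simp add: divide_simps)

lemma has_real_derivative_sigmoid: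
  "(sigmoid has_real_derivative sigmoid x * (1 - sigmoid x)) (at x)"
proof -
  have "(sigmoid has_real_derivative exp (- x) / (1 + exp (- x)) ^ 2) (at x)"
    unfolding sigmoid_def [abs_def] using one_plus_exp_pos [of "- x"]
    by (auto intro!: derivative_eq_intros simp: power2_eq_square)
  also have "exp (- x) / (1 + exp (- x)) ^ 2 = sigmoid x * (1 - sigmoid x)"
    by (simp add: exp_minus_mult_sigmoid [symmetric]) (simp add: sigmoid_def power2_eq_square)
  finally show ?thesis .
qed

lemma has_real_derivative_Jret:
  "(Jret L \<mu> has_real_derivative
     - (sigmoid x * (1 - sigmoid x)) * (\<Sum>t = 1..L. \<mu> t * real (t - 1) * (1 - sigmoid x) ^ (t - 2))) (at x)"
proof -
  let ?q = "1 - sigmoid x"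
  have "(Jret L \<mu> has_real_derivative
      (\<Sum>t = 1..L. \<mu> t * (real (t - 1) * ?q ^ (t - 1 - 1) * - (sigmoid x * ?q)))) (at x)"
    unfolding Jret_def [abs_def]
    by (rule derivative_eq_intros has_real_derivative_sigmoid refl)+
      (intro sum.cong refl, simp add: algebra_simps)
  also have "(\<Sum>t = 1..L. \<mu> t * (real (t - 1) * ?q ^ (t - 1 - 1) * - (sigmoid x * ?q)))
      = - (sigmoid x * ?q) * (\<Sum>t = 1..L. \<mu> t * real (t - 1) * ?q ^ (t - 2))"
    unfolding sum_distrib_left by (intro sum.cong refl) (simp add: numeral_2_eq_2)
  finally show ?thesis .
qed

lemma second_coefficient_le_sum:
  fixes \<mu> :: "nat \<Rightarrow> real"
  assumes "2 \<le> L" "0 \<le> q" "\<And>t. t \<in> {1..L} \<Longrightarrow> 0 \<le> \<mu> t"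
  shows "\<mu> 2 \<le> (\<Sum>t = 1..L. \<mu> t * real (t - 1) * q ^ (t - 2))"
proof -
  have "\<mu> 2 * real (2 - 1) * q ^ (2 - 2) \<le> (\<Sum>t = 1..L. \<mu> t * real (t - 1) * q ^ (t - 2))"
    using assms by (intro member_le_sum) auto
  then show ?thesis by simp
qed

lemma minus_deriv_Jret_ge:
  assumes "2 \<le> L" "\<And>t. t \<in> {1..L} \<Longrightarrow> 0 \<le> \<mu> t"
  shows "\<mu> 2 * (sigmoid x * (1 - sigmoid x)) \<le> - deriv (Jret L \<mu>) x"
proof -
  let ?S = "\<Sum>t = 1..L. \<mu> t * real (t - 1) * (1 - sigmoid x) ^ (t - 2)"
  have "\<mu> 2 \<le> ?S"
    using assms sigmoid_less_1 [of x] by (intro second_coefficient_le_sum) auto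
  moreover have "0 \<le> sigmoid x * (1 - sigmoid x)"
    using sigmoid_pos [of x] sigmoid_less_1 [of x] by simp
  ultimately have "\<mu> 2 * (sigmoid x * (1 - sigmoid x)) \<le> ?S * (sigmoid x * (1 - sigmoid x))"
    by (rule mult_right_mono)
  then show ?thesis
    unfolding DERIV_imp_deriv [OF has_real_derivative_Jret] by (simp add: mult.commute)
qed

lemma mvt_atLeast:
  fixes f :: "real \<Rightarrow> real"
  assumes "\<And>x. a \<le> x \<Longrightarrow> (f has_real_derivative f' x) (at x within {a..})"
    and "a \<le> u" "u \<le> v"
  shows "\<exists>x\<in>{u..v}. f v - f u = f' x * (v - u)"
proof -
  have "(f has_derivative (\<lambda>h. f' x * h)) (at x within {u..v})" if "u \<le> x" for x
    using assms(1) [of x] that \<open>a \<le> u\<close>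
    by (auto simp: has_field_derivative_def intro: has_derivative_subset)
  then show ?thesis
    using mvt_very_simple [OF \<open>u \<le> v\<close>, of f "\<lambda>x h. f' x * h"] by auto
qed

lemma strict_antimono_on_if_deriv_neg:
  fixes f :: "real \<Rightarrow> real"
  assumes "\<And>x. a \<le> x \<Longrightarrow> (f has_real_derivative f' x) (at x within {a..})"
    and "\<And>x. a \<le> x \<Longrightarrow> f' x < 0"
  shows "strict_antimono_on {a..} f"
proof (rule monotone_onI)
  fix u v assume "u \<in> {a..}" "v \<in> {a..}" "u < v"
  then obtain x where "x \<in> {u..v}" "f v - f u = f' x * (v - u)"
    using mvt_atLeast [OF assms(1), of u v] by auto
  with assms(2) [of x] \<open>u \<in> {a..}\<close> \<open>u < v\<close> show "f v < f u"
    using mult_neg_pos [of "f' x" "v - u"] by simp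
qed

lemma linear_lower_bound_if_deriv_ge:
  fixes f :: "real \<Rightarrow> real"
  assumes "\<And>x. a \<le> x \<Longrightarrow> (f has_real_derivative f' x) (at x within {a..})"
    and "\<And>x. a \<le> x \<Longrightarrow> c \<le> f' x" and "a \<le> s"
  shows "f a + c * (s - a) \<le> f s"
proof -
  obtain x where "x \<in> {a..s}" "f s - f a = f' x * (s - a)"
    using mvt_atLeast [OF assms(1) order_refl \<open>a \<le> s\<close>] by blast
  with assms(2) [of x] \<open>a \<le> s\<close> show ?thesis
    using mult_right_mono [of c "f' x" "s - a"] by simp
qed

lemma Jret_flow_strict_antimono:
  assumes "2 \<le> L" "0 < \<mu> 2" "\<And>t. t \<in> {1..L} \<Longrightarrow> 0 \<le> \<mu> t"
    and "\<And>s. 0 \<le> s \<Longrightarrow> (\<theta> has_real_derivative deriv (Jret L \<mu>) (\<theta> s)) (at s within {0..})"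
  shows "strict_antimono_on {0..} \<theta>"
proof (rule strict_antimono_on_if_deriv_neg [OF assms(4)])
  fix s :: real
  have "0 < \<mu> 2 * (sigmoid (\<theta> s) * (1 - sigmoid (\<theta> s)))"
    using sigmoid_pos sigmoid_less_1 \<open>0 < \<mu> 2\<close> by simp
  then show "deriv (Jret L \<mu>) (\<theta> s) < 0"
    using minus_deriv_Jret_ge [where \<mu> = \<mu> and x = "\<theta> s", OF assms(1,3)] by linarith
qed

lemma Jret_flow_exp_growth:
  assumes "2 \<le> L" "0 < \<mu> 2" "\<And>t. t \<in> {1..L} \<Longrightarrow> 0 \<le> \<mu> t"
    and flow: "\<And>s. 0 \<le> s \<Longrightarrow> (\<theta> has_real_derivative deriv (Jret L \<mu>) (\<theta> s)) (at s within {0..})"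
    and "0 \<le> s"
  shows "\<mu> 2 * (1 - sigmoid (\<theta> 0)) ^ 2 * s \<le> exp (- \<theta> s)"
proof -
  have "\<mu> 2 * (1 - sigmoid (\<theta> 0)) ^ 2 \<le> exp (- \<theta> r) * - deriv (Jret L \<mu>) (\<theta> r)"
    if "0 \<le> r" for r
  proof -
    let ?p = "sigmoid (\<theta> r)"
    have "\<theta> r \<le> \<theta> 0"
    proof (cases "r = 0")
      case False
      with that show ?thesis
        using monotone_onD [OF Jret_flow_strict_antimono [OF assms(1-4)], of 0 r] by simp
    qed simp
    then have "?p \<le> sigmoid (\<theta> 0)"
      by (simp add: strict_mono_less_eq [OF strict_mono_sigmoid])
    then have "(1 - sigmoid (\<theta> 0)) ^ 2 \<le> (1 - ?p) ^ 2"
      using sigmoid_less_1 [of "\<theta> 0"] by (intro power_mono) auto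
    also have "(1 - ?p) ^ 2 = exp (- \<theta> r) * (?p * (1 - ?p))"
      by (simp only: mult.assoc [symmetric] exp_minus_mult_sigmoid power2_eq_square)
    finally have "\<mu> 2 * (1 - sigmoid (\<theta> 0)) ^ 2 \<le> \<mu> 2 * (exp (- \<theta> r) * (?p * (1 - ?p)))"
      using \<open>0 < \<mu> 2\<close> by simp
    also have "\<dots> = exp (- \<theta> r) * (\<mu> 2 * (?p * (1 - ?p)))"
      by (simp only: mult_ac)
    also have "\<dots> \<le> exp (- \<theta> r) * - deriv (Jret L \<mu>) (\<theta> r)"
      using minus_deriv_Jret_ge [where \<mu> = \<mu> and x = "\<theta> r", OF assms(1,3)]
      by (intro mult_left_mono) auto
    finally show ?thesis .
  qed
  moreover have "((\<lambda>s. exp (- \<theta> s)) has_real_derivative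
      exp (- \<theta> r) * - deriv (Jret L \<mu>) (\<theta> r)) (at r within {0..})" if "0 \<le> r" for r
    by (rule derivative_eq_intros flow [OF that] refl)+
  ultimately have "exp (- \<theta> 0) + \<mu> 2 * (1 - sigmoid (\<theta> 0)) ^ 2 * (s - 0) \<le> exp (- \<theta> s)"
    by (intro linear_lower_bound_if_deriv_ge [where f = "\<lambda>s. exp (- \<theta> s)"] \<open>0 \<le> s\<close>)
  then show ?thesis
    using exp_gt_zero [of "- \<theta> 0"] unfolding diff_zero by linarith
qed

lemma sigmoid_le_inverse_if_exp_ge:
  assumes "0 < c" "c \<le> exp (- x)"
  shows "sigmoid x \<le> 1 / c"
  unfolding sigmoid_def using assms by (intro divide_left_mono) auto

lemma tendsto_zero_if_le_inverse:
  fixes f :: "real \<Rightarrow> real"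
  assumes "\<And>s. 0 \<le> f s" "\<And>s. S \<le> s \<Longrightarrow> f s \<le> K / s"
  shows "(f \<longlongrightarrow> 0) at_top"
proof (rule tendsto_sandwich [of "\<lambda>_. 0" _ _ "\<lambda>s. K / s"])
  show "\<forall>\<^sub>F s in at_top. f s \<le> K / s"
    using eventually_ge_at_top [of S] by eventually_elim (rule assms(2))
  show "((\<lambda>s. K / s) \<longlongrightarrow> 0) at_top"
    by (intro tendsto_divide_0 [OF tendsto_const] filterlim_at_top_imp_at_infinity filterlim_ident)
qed (use assms(1) in auto)

lemma tendsto_exp_len:
  "(f \<longlongrightarrow> 0) F \<Longrightarrow> ((\<lambda>s. exp_len L (f s)) \<longlongrightarrow> real L) F"
  using tendsto_sum [of "{1..L}" "\<lambda>t s. (1 - f s) ^ (t - 1)" "\<lambda>t. 1"]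
  by (auto simp: exp_len_def intro!: tendsto_eq_intros)

theorem theoremA1:
  fixes Lmax :: nat and \<mu> :: "nat \<Rightarrow> real" and \<mu>min :: real
    and \<theta> :: "real \<Rightarrow> real" and \<theta>0 :: real
  assumes "Lmax \<ge> 2"
    and "\<mu>min > 0"
    and "\<And>t. t \<in> {1..Lmax} \<Longrightarrow> \<mu> t \<ge> \<mu>min"
    and "\<And>s. s \<ge> 0 \<Longrightarrow>
           (\<theta> has_real_derivative deriv (Jret Lmax \<mu>) (\<theta> s)) (at s within {0..})"
    and "\<theta> 0 = \<theta>0"
  shows "strict_antimono_on {0..} (\<lambda>s. sigmoid (\<theta> s))
       \<and> ((\<lambda>s. sigmoid (\<theta> s)) \<longlongrightarrow> 0) at_top
       \<and> (\<exists>S K. S > 0 \<and> K > 0 \<and> (\<forall>s\<ge>S. sigmoid (\<theta> s) \<le> K / s))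
       \<and> ((\<lambda>s. exp_len Lmax (sigmoid (\<theta> s))) \<longlongrightarrow> real Lmax) at_top"
proof -
  have \<mu>_2: "0 < \<mu> 2"
    using assms(1,2) assms(3) [of 2] by simp
  have \<mu>_nonneg: "0 \<le> \<mu> t" if "t \<in> {1..Lmax}" for t
    using assms(2) assms(3) [OF that] by simp
  note flow_hyps = assms(1) \<mu>_2 \<mu>_nonneg assms(4)
  define c where "c = \<mu> 2 * (1 - sigmoid \<theta>0) ^ 2"
  have "0 < c"
    unfolding c_def using \<mu>_2 sigmoid_less_1 [of \<theta>0] by simp
  have bound: "sigmoid (\<theta> s) \<le> (1 / c) / s" if "0 < s" for s
    using sigmoid_le_inverse_if_exp_ge [of "c * s"] \<open>0 < c\<close> that
      Jret_flow_exp_growth [OF flow_hyps, of s] assms(5) by (simp add: c_def)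
  have "strict_antimono_on {0..} (\<lambda>s. sigmoid (\<theta> s))"
    by (rule strict_antimono_on_sigmoid_comp [OF Jret_flow_strict_antimono [OF flow_hyps]])
  moreover have "((\<lambda>s. sigmoid (\<theta> s)) \<longlongrightarrow> 0) at_top"
    using bound sigmoid_pos less_imp_le
    by (intro tendsto_zero_if_le_inverse [where S = 1 and K = "1 / c"]) auto
  moreover have "\<exists>S K. S > 0 \<and> K > 0 \<and> (\<forall>s\<ge>S. sigmoid (\<theta> s) \<le> K / s)"
    using bound \<open>0 < c\<close> by (intro exI [of _ 1] exI [of _ "1 / c"]) auto
  ultimately show ?thesis
    using tendsto_exp_len by blast
qed

end
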